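(* The Top-$t$ Truncated Harmonic rule has metric distortion $O(m/t)$ (indeed at most $21m/t$).
   Context: Setting: $n$ agents, $m$ alternatives, $1\le t\le m$; each agent has an underlying strict ranking but only her ordered top-$t$ list is reported (top-$t$ profile $\vec\sigma_t$); $r_i(Y)\in\{1,\dots,t\}$ is the reported rank of $Y$ when $Y$ is among $i$'s top $t$; $H_t=\sum_{k=1}^t1/k$. For the reported information, $Y\succ_i\hat X$ holds when $Y$ is among $i$'s top $t$ and either $\hat X$ is not among them or $r_i(Y)<r_i(\hat X)$. Metric framework: a pseudometric $d$ on agents and alternatives is consistent with $\vec\sigma_t$ if for some full ranking profile whose top-$t$ prefixes agree with $\vec\sigma_t$, $X\succ_iY\Rightarrow d(i,X)\le d(i,Y)$. $\mathrm{SC}(X,d)=\sum_id(i,X)$; metric distortion of $f$: $\sup_{\vec\sigma_t}\sup_d\mathbb E_{X\sim f(\vec\sigma_t)}[\mathrm{SC}(X,d)]/\min_X\mathrm{SC}(X,d)$. Top-$t$ Truncated Harmonic rule: fix a deterministic voting rule $g$ on top-$t$ profiles with metric distortion at most $6m/t+1$ (such a rule exists), and let $\hat X=g(\vec\sigma_t)$. Pick an agent $i$ uniformly at random and output $Y$ with probability $p(i,Y)=\frac{1}{2H_t r_i(Y)}$ if $Y\succ_i\hat X$, $p(i,\hat X)=1-\sum_{Y\succ_i\hat X}p(i,Y)$, and $p(i,Y)=0$ otherwise. *)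

theory Defs
  imports Complex_Main
begin

text \<open>A (top-t or full) ranking is a list of distinct alternatives, best first.
  Profiles are functions from agents to rankings (only values on N matter).\<close>

definition top_t_profile :: "'v set \<Rightarrow> 'a set \<Rightarrow> nat \<Rightarrow> ('v \<Rightarrow> 'a list) \<Rightarrow> bool" where
  "top_t_profile N A t \<sigma> \<longleftrightarrow>
     (\<forall>i\<in>N. distinct (\<sigma> i) \<and> length (\<sigma> i) = t \<and> set (\<sigma> i) \<subseteq> A)"

definition full_profile :: "'v set \<Rightarrow> 'a set \<Rightarrow> ('v \<Rightarrow> 'a list) \<Rightarrow> bool" where
  "full_profile N A \<pi> \<longleftrightarrow> (\<forall>i\<in>N. distinct (\<pi> i) \<and> set (\<pi> i) = A)"

text \<open>0-based position of y in a (distinct) list; the reported rank is pos + 1.\<close>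
definition pos :: "'a list \<Rightarrow> 'a \<Rightarrow> nat" where
  "pos xs y = (THE k. k < length xs \<and> xs ! k = y)"

definition rnk :: "('v \<Rightarrow> 'a list) \<Rightarrow> 'v \<Rightarrow> 'a \<Rightarrow> nat" where
  "rnk \<sigma> i Y = pos (\<sigma> i) Y + 1"

definition rep_pref :: "('v \<Rightarrow> 'a list) \<Rightarrow> 'v \<Rightarrow> 'a \<Rightarrow> 'a \<Rightarrow> bool" where
  "rep_pref \<sigma> i Y X \<longleftrightarrow> Y \<in> set (\<sigma> i) \<and> (X \<notin> set (\<sigma> i) \<or> rnk \<sigma> i Y < rnk \<sigma> i X)"

text \<open>Pseudometric on agents (Inl) and alternatives (Inr), axioms required on N \<union> A.\<close>
definition pseudometric_on :: "('v + 'a) set \<Rightarrow> (('v + 'a) \<Rightarrow> ('v + 'a) \<Rightarrow> real) \<Rightarrow> bool" where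
  "pseudometric_on S d \<longleftrightarrow>
     (\<forall>x\<in>S. d x x = 0) \<and>
     (\<forall>x\<in>S. \<forall>y\<in>S. d x y \<ge> 0 \<and> d x y = d y x) \<and>
     (\<forall>x\<in>S. \<forall>y\<in>S. \<forall>z\<in>S. d x z \<le> d x y + d y z)"

definition consistent :: "'v set \<Rightarrow> 'a set \<Rightarrow> nat \<Rightarrow> ('v \<Rightarrow> 'a list)
                          \<Rightarrow> (('v + 'a) \<Rightarrow> ('v + 'a) \<Rightarrow> real) \<Rightarrow> bool" where
  "consistent N A t \<sigma> d \<longleftrightarrow>
     pseudometric_on (Inl ` N \<union> Inr ` A) d \<and>
     (\<exists>\<pi>. full_profile N A \<pi> \<and> (\<forall>i\<in>N. take t (\<pi> i) = \<sigma> i) \<and>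
          (\<forall>i\<in>N. \<forall>k l. k < l \<and> l < length (\<pi> i) \<longrightarrow>
               d (Inl i) (Inr (\<pi> i ! k)) \<le> d (Inl i) (Inr (\<pi> i ! l))))"

definition SC :: "'v set \<Rightarrow> (('v + 'a) \<Rightarrow> ('v + 'a) \<Rightarrow> real) \<Rightarrow> 'a \<Rightarrow> real" where
  "SC N d X = (\<Sum>i\<in>N. d (Inl i) (Inr X))"

definition H :: "nat \<Rightarrow> real" where
  "H t = (\<Sum>k=1..t. 1 / real k)"

text \<open>Probability p(i,Y) of the Top-t Truncated Harmonic rule, given Xhat = g(sigma).\<close>
definition p_TH :: "'a set \<Rightarrow> nat \<Rightarrow> ('v \<Rightarrow> 'a list) \<Rightarrow> 'a \<Rightarrow> 'v \<Rightarrow> 'a \<Rightarrow> real" where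
  "p_TH A t \<sigma> Xh i Y =
     (if rep_pref \<sigma> i Y Xh then 1 / (2 * H t * real (rnk \<sigma> i Y))
      else if Y = Xh then
        1 - (\<Sum>Z\<in>{Z\<in>A. rep_pref \<sigma> i Z Xh}. 1 / (2 * H t * real (rnk \<sigma> i Z)))
      else 0)"

text \<open>Expected social cost of the rule's output: agent i uniform on N, then Y \<sim> p(i,\<cdot>).\<close>
definition exp_SC_TH :: "'v set \<Rightarrow> 'a set \<Rightarrow> nat \<Rightarrow> (('v \<Rightarrow> 'a list) \<Rightarrow> 'a)
                         \<Rightarrow> ('v \<Rightarrow> 'a list) \<Rightarrow> (('v + 'a) \<Rightarrow> ('v + 'a) \<Rightarrow> real) \<Rightarrow> real" where
  "exp_SC_TH N A t g \<sigma> d =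
     (\<Sum>i\<in>N. (1 / real (card N)) * (\<Sum>Y\<in>A. p_TH A t \<sigma> (g \<sigma>) i Y * SC N d Y))"

definition det_distortion_le :: "'v set \<Rightarrow> 'a set \<Rightarrow> nat \<Rightarrow> (('v \<Rightarrow> 'a list) \<Rightarrow> 'a) \<Rightarrow> real \<Rightarrow> bool" where
  "det_distortion_le N A t g D \<longleftrightarrow>
     (\<forall>\<sigma>. top_t_profile N A t \<sigma> \<longrightarrow> g \<sigma> \<in> A \<and>
        (\<forall>d. consistent N A t \<sigma> d \<longrightarrow> (\<forall>X\<in>A. SC N d (g \<sigma>) \<le> D * SC N d X)))"

end

theory Submission
  imports Defs
begin

text \<open>Every alternative Y that agent i may output lies weakly above Xh = g(\<sigma>) in i's
  ranking (either Y = Xh or Y is reported above it), so d(i,Y) \<le> d(i,Xh). Routing through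
  agent i, SC(Y) \<le> SC(X) + n (d(i,X) + d(i,Xh)) for every alternative X. Averaging over the
  uniformly chosen agent gives an expected cost of at most 2 SC(X) + SC(Xh), and the
  (6m/t + 1)-distortion of g bounds this by (6m/t + 3) SC(X) \<le> 21 (m/t) SC(X).\<close>

lemma pos_nth:
  assumes "distinct xs" "y \<in> set xs"
  shows "pos xs y < length xs \<and> xs ! pos xs y = y"
  unfolding pos_def by (rule theI') (rule distinct_Ex1[OF assms])

lemma H_pos: "1 \<le> t \<Longrightarrow> 0 < H t"
  unfolding H_def by (rule sum_pos) auto

lemma sum_harmonic_weights_le_half:
  assumes "distinct (\<sigma> i)" "length (\<sigma> i) = t" "1 \<le> t" "S \<subseteq> set (\<sigma> i)"
  shows "(\<Sum>Z\<in>S. 1 / (2 * H t * real (rnk \<sigma> i Z))) \<le> 1/2"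
proof -
  have Hpos: "0 < H t" using H_pos[OF assms(3)] .
  let ?w = "\<lambda>k::nat. 1 / (2 * H t * real k)"
  have inj: "inj_on (rnk \<sigma> i) S"
  proof (rule inj_onI)
    fix a b assume "a \<in> S" "b \<in> S" "rnk \<sigma> i a = rnk \<sigma> i b"
    then show "a = b"
      using pos_nth[OF assms(1), of a] pos_nth[OF assms(1), of b] assms(4)
      unfolding rnk_def by auto
  qed
  have ranks: "rnk \<sigma> i ` S \<subseteq> {1..t}"
    using pos_nth[OF assms(1)] assms(2,4) unfolding rnk_def by fastforce
  have "(\<Sum>Z\<in>S. ?w (rnk \<sigma> i Z)) = (\<Sum>k\<in>rnk \<sigma> i ` S. ?w k)"
    using sum.reindex[OF inj, of ?w] by simp
  also have "\<dots> \<le> (\<Sum>k\<in>{1..t}. ?w k)"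
    by (rule sum_mono2) (use ranks Hpos in auto)
  also have "\<dots> = (1 / (2 * H t)) * H t"
    unfolding H_def by (simp add: sum_distrib_left)
  also have "\<dots> = 1/2" using Hpos by simp
  finally show ?thesis .
qed

lemma rep_pref_precedes:
  assumes "distinct \<pi>" "X \<in> set \<pi>" "take t \<pi> = \<sigma> i" "rep_pref \<sigma> i Y X"
  shows "\<exists>k l. k < l \<and> l < length \<pi> \<and> \<pi> ! k = Y \<and> \<pi> ! l = X"
proof -
  have dist: "distinct (\<sigma> i)" using assms(1,3) distinct_take by metis
  have Y: "Y \<in> set (\<sigma> i)" using assms(4) unfolding rep_pref_def by simp
  have prefix_nth: "k < length \<pi> \<and> \<pi> ! k = \<sigma> i ! k" if "k < length (\<sigma> i)" for k
    using that assms(3)[symmetric] by auto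
  define k where "k = pos (\<sigma> i) Y"
  have k: "k < length (\<sigma> i)" "\<pi> ! k = Y"
    using pos_nth[OF dist Y] prefix_nth unfolding k_def by auto
  show ?thesis
  proof (cases "X \<in> set (\<sigma> i)")
    case True
    define l where "l = pos (\<sigma> i) X"
    have "k < l" using assms(4) True unfolding rep_pref_def rnk_def k_def l_def by simp
    moreover have "l < length \<pi>" "\<pi> ! l = X"
      using pos_nth[OF dist True] prefix_nth unfolding l_def by auto
    ultimately show ?thesis using k by blast
  next
    case False
    obtain l where l: "l < length \<pi>" "\<pi> ! l = X"
      using assms(2) by (metis in_set_conv_nth)
    have "length (\<sigma> i) \<le> l"
    proof (rule ccontr)
      assume "\<not> length (\<sigma> i) \<le> l"
      then have "\<sigma> i ! l = X" using l prefix_nth[of l] by simp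
      then show False using False \<open>\<not> length (\<sigma> i) \<le> l\<close> nth_mem[of l "\<sigma> i"] by simp
    qed
    then show ?thesis using k l by (metis order.strict_trans2)
  qed
qed

lemma consistent_rep_pref_dist_le:
  assumes "consistent N A t \<sigma> d" "i \<in> N" "X \<in> A" "rep_pref \<sigma> i Y X"
  shows "d (Inl i) (Inr Y) \<le> d (Inl i) (Inr X)"
proof -
  obtain \<pi> where full: "full_profile N A \<pi>" and prefix: "\<forall>i\<in>N. take t (\<pi> i) = \<sigma> i"
    and mono: "\<forall>i\<in>N. \<forall>k l. k < l \<and> l < length (\<pi> i) \<longrightarrow>
               d (Inl i) (Inr (\<pi> i ! k)) \<le> d (Inl i) (Inr (\<pi> i ! l))"
    using assms(1) unfolding consistent_def by blast
  have "distinct (\<pi> i)" "X \<in> set (\<pi> i)"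
    using full assms(2,3) unfolding full_profile_def by auto
  then obtain k l where "k < l" "l < length (\<pi> i)" "\<pi> i ! k = Y" "\<pi> i ! l = X"
    using rep_pref_precedes prefix assms(2,4) by metis
  then show ?thesis using mono assms(2) by metis
qed

lemma SC_nonneg:
  assumes "pseudometric_on (Inl ` N \<union> Inr ` A) d" "X \<in> A"
  shows "0 \<le> SC N d X"
  unfolding SC_def by (rule sum_nonneg) (use assms in \<open>auto simp: pseudometric_on_def\<close>)

lemma SC_le_through_agent:
  assumes "pseudometric_on (Inl ` N \<union> Inr ` A) d" "i \<in> N" "X \<in> A" "Y \<in> A"
  shows "SC N d Y \<le> SC N d X + real (card N) * (d (Inl i) (Inr X) + d (Inl i) (Inr Y))"
proof -
  have "d (Inl j) (Inr Y) \<le> d (Inl j) (Inr X) + (d (Inl i) (Inr X) + d (Inl i) (Inr Y))"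
    if j: "j \<in> N" for j
  proof -
    have mem: "Inl j \<in> Inl ` N \<union> Inr ` A" "Inl i \<in> Inl ` N \<union> Inr ` A"
      "Inr X \<in> Inl ` N \<union> Inr ` A" "Inr Y \<in> Inl ` N \<union> Inr ` A" using assms(2-4) j by auto
    have "d (Inl j) (Inr Y) \<le> d (Inl j) (Inr X) + d (Inr X) (Inr Y)"
      "d (Inr X) (Inr Y) \<le> d (Inr X) (Inl i) + d (Inl i) (Inr Y)"
      "d (Inr X) (Inl i) = d (Inl i) (Inr X)"
      using assms(1) mem unfolding pseudometric_on_def by blast+
    then show ?thesis by linarith
  qed
  then have "SC N d Y \<le> (\<Sum>j\<in>N. d (Inl j) (Inr X) + (d (Inl i) (Inr X) + d (Inl i) (Inr Y)))"
    unfolding SC_def by (rule sum_mono)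
  also have "\<dots> = SC N d X + real (card N) * (d (Inl i) (Inr X) + d (Inl i) (Inr Y))"
    unfolding SC_def by (simp add: sum.distrib)
  finally show ?thesis .
qed

lemma p_TH_support:
  "p_TH A t \<sigma> Xh i Y \<noteq> 0 \<Longrightarrow> rep_pref \<sigma> i Y Xh \<or> Y = Xh"
  unfolding p_TH_def by (simp split: if_splits)

lemma p_TH_nonneg:
  assumes "top_t_profile N A t \<sigma>" "1 \<le> t" "i \<in> N"
  shows "0 \<le> p_TH A t \<sigma> Xh i Y"
proof -
  have "distinct (\<sigma> i)" "length (\<sigma> i) = t"
    using assms(1,3) unfolding top_t_profile_def by auto
  moreover have "{Z\<in>A. rep_pref \<sigma> i Z Xh} \<subseteq> set (\<sigma> i)"
    unfolding rep_pref_def by auto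
  ultimately have "(\<Sum>Z\<in>{Z\<in>A. rep_pref \<sigma> i Z Xh}. 1 / (2 * H t * real (rnk \<sigma> i Z))) \<le> 1/2"
    by (rule sum_harmonic_weights_le_half[OF _ _ assms(2)])
  then show ?thesis using H_pos[OF assms(2)] unfolding p_TH_def by simp
qed

lemma sum_p_TH:
  assumes "finite A" "Xh \<in> A"
  shows "(\<Sum>Y\<in>A. p_TH A t \<sigma> Xh i Y) = 1"
proof -
  let ?p = "p_TH A t \<sigma> Xh i" and ?S = "{Z\<in>A. rep_pref \<sigma> i Z Xh}"
  let ?w = "\<lambda>Z. 1 / (2 * H t * real (rnk \<sigma> i Z))"
  have not_self: "\<not> rep_pref \<sigma> i Xh Xh" unfolding rep_pref_def by auto
  have "(\<Sum>Y\<in>A. ?p Y) = (\<Sum>Y\<in>?S. ?p Y) + (\<Sum>Y\<in>A - ?S. ?p Y)"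
    using sum.subset_diff[of ?S A] assms(1) by (simp add: add.commute)
  also have "(\<Sum>Y\<in>?S. ?p Y) = (\<Sum>Z\<in>?S. ?w Z)"
    by (rule sum.cong) (auto simp: p_TH_def)
  also have "(\<Sum>Y\<in>A - ?S. ?p Y) = (\<Sum>Y\<in>A - ?S. if Y = Xh then ?p Xh else 0)"
    by (rule sum.cong) (auto simp: p_TH_def)
  also have "\<dots> = 1 - (\<Sum>Z\<in>?S. ?w Z)"
    using assms not_self by (simp add: sum.delta p_TH_def)
  finally show ?thesis by simp
qed

lemma sum_weighted_le_bound:
  assumes "finite A" "\<And>Y. Y \<in> A \<Longrightarrow> 0 \<le> p Y" "(\<Sum>Y\<in>A. p Y) = 1"
    and "\<And>Y. Y \<in> A \<Longrightarrow> p Y \<noteq> 0 \<Longrightarrow> f Y \<le> (b::real)"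
  shows "(\<Sum>Y\<in>A. p Y * f Y) \<le> b"
proof -
  have "(\<Sum>Y\<in>A. p Y * f Y) \<le> (\<Sum>Y\<in>A. p Y * b)"
    by (rule sum_mono) (metis assms(2,4) mult_left_mono mult_zero_left order_refl)
  also have "\<dots> = b" using assms(3) by (simp add: sum_distrib_right[symmetric])
  finally show ?thesis .
qed

lemma exp_SC_TH_le:
  assumes "finite N" "N \<noteq> {}" "finite A" "1 \<le> t" "top_t_profile N A t \<sigma>"
    and "consistent N A t \<sigma> d" "g \<sigma> \<in> A" "X \<in> A"
  shows "exp_SC_TH N A t g \<sigma> d \<le> 2 * SC N d X + SC N d (g \<sigma>)"
proof -
  define Xh where "Xh = g \<sigma>"
  define n where "n = real (card N)"
  have Xh_A: "Xh \<in> A" using assms(7) unfolding Xh_def .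
  define B where "B i = SC N d X + n * (d (Inl i) (Inr X) + d (Inl i) (Inr Xh))" for i
  have metric: "pseudometric_on (Inl ` N \<union> Inr ` A) d"
    using assms(6) unfolding consistent_def by blast
  have n_pos: "0 < n" using assms(1,2) unfolding n_def by (simp add: card_gt_0_iff)
  have agent_bound: "(\<Sum>Y\<in>A. p_TH A t \<sigma> Xh i Y * SC N d Y) \<le> B i" if i: "i \<in> N" for i
  proof (rule sum_weighted_le_bound[OF assms(3) p_TH_nonneg[OF assms(5,4) i] sum_p_TH[OF assms(3) Xh_A]])
    fix Y assume Y: "Y \<in> A" and "p_TH A t \<sigma> Xh i Y \<noteq> 0"
    then consider "rep_pref \<sigma> i Y Xh" | "Y = Xh" using p_TH_support[of A t \<sigma> Xh i Y] by blast
    then have "d (Inl i) (Inr Y) \<le> d (Inl i) (Inr Xh)"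
      by cases (simp_all add: consistent_rep_pref_dist_le[OF assms(6) i Xh_A])
    then have "n * (d (Inl i) (Inr X) + d (Inl i) (Inr Y)) \<le> n * (d (Inl i) (Inr X) + d (Inl i) (Inr Xh))"
      using n_pos by simp
    then show "SC N d Y \<le> B i"
      using SC_le_through_agent[OF metric i assms(8) Y] unfolding B_def n_def by linarith
  qed
  have "exp_SC_TH N A t g \<sigma> d \<le> (\<Sum>i\<in>N. (1 / n) * B i)"
    unfolding exp_SC_TH_def Xh_def[symmetric] n_def[symmetric]
    by (rule sum_mono) (use agent_bound n_pos in \<open>simp add: divide_right_mono\<close>)
  also have "\<dots> = (1 / n) * (n * SC N d X + n * (SC N d X + SC N d Xh))"
    unfolding sum_distrib_left[symmetric] B_def n_def
    by (simp add: sum.distrib sum_distrib_left[symmetric] SC_def)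
  also have "\<dots> = 2 * SC N d X + SC N d Xh" using n_pos by (simp add: field_simps)
  finally show ?thesis by (simp only: Xh_def)
qed

theorem mainTheorem12:
  fixes N :: "'v set" and A :: "'a set" and t m :: nat
    and g :: "('v \<Rightarrow> 'a list) \<Rightarrow> 'a"
    and \<sigma> :: "'v \<Rightarrow> 'a list" and d :: "('v + 'a) \<Rightarrow> ('v + 'a) \<Rightarrow> real"
  assumes "finite N" and "N \<noteq> {}" and "finite A" and "card A = m"
    and "1 \<le> t" and "t \<le> m"
    and "det_distortion_le N A t g (6 * real m / real t + 1)"
    and "top_t_profile N A t \<sigma>"
    and "consistent N A t \<sigma> d"
    and "X \<in> A"
  shows "exp_SC_TH N A t g \<sigma> d \<le> (21 * real m / real t) * SC N d X"
proof -
  define q where "q = real m / real t"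
  have g: "g \<sigma> \<in> A" "SC N d (g \<sigma>) \<le> (6 * q + 1) * SC N d X"
    using assms(7-10) unfolding det_distortion_le_def q_def by auto
  have "pseudometric_on (Inl ` N \<union> Inr ` A) d"
    using assms(9) unfolding consistent_def by blast
  then have "0 \<le> SC N d X" by (rule SC_nonneg[OF _ assms(10)])
  moreover have "1 \<le> q" using assms(5,6) unfolding q_def by simp
  ultimately have "0 \<le> (15 * q - 3) * SC N d X" by (intro mult_nonneg_nonneg) simp_all
  then have "2 * SC N d X + SC N d (g \<sigma>) \<le> 21 * q * SC N d X"
    using g(2) by (simp add: algebra_simps)
  moreover have "exp_SC_TH N A t g \<sigma> d \<le> 2 * SC N d X + SC N d (g \<sigma>)"
    by (rule exp_SC_TH_le[where g = g, OF assms(1-3,5,8,9) g(1) assms(10)])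
  ultimately show ?thesis unfolding q_def by simp
qed

end
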